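(* Let $\tau\in(0,1]$ and let $\underline{q}^*$ be the optimal lower $\tau$-quantile. Any policy $\pi^*$ such that $F^{\pi^*}(\mathrm{prec}(\underline{q}^* )) = F^*(\mathrm{prec}(\underline{q}^* ))$, where $F^*(w)=\min_\pi F^\pi(w)$, is an optimal policy with regard to the lower $\tau$-quantile criterion.
   Context: An MDP is a tuple $(\mathcal S,\mathcal A,\mathcal P,r,s_0)$ with finite state set, finite action set, transition probabilities $\mathcal P(s,a,s')$, reward function $r:\mathcal S\times\mathcal A\to\mathcal R$, initial state $s_0$, and finite horizon $T$; policies are sequences of $T$ (possibly history-dependent, randomized) decision rules. The wealth of a history is $w(h_0)=w_0$, $w(h_t)=w(h_{t-1})\circ r(s_{t-1},a_{t-1})$ for a binary operation $\circ$ with left identity $w_0$. The set $\mathcal W_T$ of wealth levels of $T$-histories is totally ordered by $\preceq_{\mathcal W}$ with least element $\min(\mathcal W_T)$ and greatest element. For a policy $\pi$, $p^\pi(w)$ is the probability that the generated $T$-history has wealth $w$, and $F^\pi(w)=\sum_{w'\preceq_{\mathcal W}w}p^\pi(w')$. The lower $\tau$-quantile of $\pi$ is $\underline{q}^\pi_\tau=\min\{w\in\mathcal W_T:F^\pi(w)\ge\tau\}$; $\underline{q}^*=\max_\pi\underline{q}^\pi_\tau$, and a policy is optimal for the lower $\tau$-quantile criterion if its lower $\tau$-quantile equals $\underline{q}^*$. For $w\in\mathcal W_T$, $\mathrm{prec}(w)$ is the greatest (w.r.t. $\preceq_{\mathcal W}$) element of $\mathcal W_T$ strictly below $w$, and $\mathrm{prec}(w)=w$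 if no such element exists. *)

theory Defs
  imports "HOL-Probability.Probability"
begin

text \<open>
  Finite-horizon MDP with finite state type 's and finite action type 'a.  Wealth values live in a linearly ordered type 'w, combined by the binary
  operation op with left identity w0.
  A history h_t = (s_0,a_0,...,s_{t-1},a_{t-1},s_t) is represented as the list of
  state/action pairs together with the current state.
  A policy is a sequence of (history-dependent, randomized) decision rules:
  the decision rule at time t maps a t-history to a distribution over actions.
\<close>

type_synonym ('s, 'a) hist = "('s \<times> 'a) list \<times> 's"
type_synonym ('s, 'a) policy = "nat \<Rightarrow> ('s, 'a) hist \<Rightarrow> 'a pmf"

fun hist_dist ::
  "('s \<Rightarrow> 'a \<Rightarrow> 's pmf) \<Rightarrow> 's \<Rightarrow> ('s, 'a) policy \<Rightarrow> nat \<Rightarrow> ('s, 'a) hist pmf" where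
  "hist_dist P s0 pol 0 = return_pmf ([], s0)"
| "hist_dist P s0 pol (Suc t) =
     bind_pmf (hist_dist P s0 pol t) (\<lambda>(xs, s).
       bind_pmf (pol t (xs, s)) (\<lambda>a.
         map_pmf (\<lambda>s'. (xs @ [(s, a)], s')) (P s a)))"

definition wealth ::
  "('w \<Rightarrow> 'w \<Rightarrow> 'w) \<Rightarrow> 'w \<Rightarrow> ('s \<Rightarrow> 'a \<Rightarrow> 'w) \<Rightarrow> ('s, 'a) hist \<Rightarrow> 'w" where
  "wealth op w0 r h = foldl (\<lambda>w (s, a). op w (r s a)) w0 (fst h)"

definition wealth_levels ::
  "('w \<Rightarrow> 'w \<Rightarrow> 'w) \<Rightarrow> 'w \<Rightarrow> ('s \<Rightarrow> 'a \<Rightarrow> 'w) \<Rightarrow> nat \<Rightarrow> 'w set" where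
  "wealth_levels op w0 r T = {wealth op w0 r h | h. length (fst h) = T}"

definition wealth_prob ::
  "('s \<Rightarrow> 'a \<Rightarrow> 's pmf) \<Rightarrow> 's \<Rightarrow> ('w \<Rightarrow> 'w \<Rightarrow> 'w) \<Rightarrow> 'w \<Rightarrow> ('s \<Rightarrow> 'a \<Rightarrow> 'w) \<Rightarrow> nat
    \<Rightarrow> ('s, 'a) policy \<Rightarrow> 'w \<Rightarrow> real" where
  "wealth_prob P s0 op w0 r T pol w = pmf (map_pmf (wealth op w0 r) (hist_dist P s0 pol T)) w"

definition wealth_cdf ::
  "('s \<Rightarrow> 'a \<Rightarrow> 's pmf) \<Rightarrow> 's \<Rightarrow> ('w::linorder \<Rightarrow> 'w \<Rightarrow> 'w) \<Rightarrow> 'w \<Rightarrow> ('s \<Rightarrow> 'a \<Rightarrow> 'w) \<Rightarrow> nat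
    \<Rightarrow> ('s, 'a) policy \<Rightarrow> 'w \<Rightarrow> real" where
  "wealth_cdf P s0 op w0 r T pol w =
     (\<Sum>w' \<in> {w' \<in> wealth_levels op w0 r T. w' \<le> w}. wealth_prob P s0 op w0 r T pol w')"

definition lower_quantile ::
  "('s \<Rightarrow> 'a \<Rightarrow> 's pmf) \<Rightarrow> 's \<Rightarrow> ('w::linorder \<Rightarrow> 'w \<Rightarrow> 'w) \<Rightarrow> 'w \<Rightarrow> ('s \<Rightarrow> 'a \<Rightarrow> 'w) \<Rightarrow> nat
    \<Rightarrow> real \<Rightarrow> ('s, 'a) policy \<Rightarrow> 'w" where
  "lower_quantile P s0 op w0 r T tau pol =
     Min {w \<in> wealth_levels op w0 r T. wealth_cdf P s0 op w0 r T pol w \<ge> tau}"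

definition opt_lower_quantile ::
  "('s \<Rightarrow> 'a \<Rightarrow> 's pmf) \<Rightarrow> 's \<Rightarrow> ('w::linorder \<Rightarrow> 'w \<Rightarrow> 'w) \<Rightarrow> 'w \<Rightarrow> ('s \<Rightarrow> 'a \<Rightarrow> 'w) \<Rightarrow> nat
    \<Rightarrow> real \<Rightarrow> 'w" where
  "opt_lower_quantile P s0 op w0 r T tau =
     Max (range (\<lambda>pol. lower_quantile P s0 op w0 r T tau pol))"

definition opt_cdf ::
  "('s \<Rightarrow> 'a \<Rightarrow> 's pmf) \<Rightarrow> 's \<Rightarrow> ('w::linorder \<Rightarrow> 'w \<Rightarrow> 'w) \<Rightarrow> 'w \<Rightarrow> ('s \<Rightarrow> 'a \<Rightarrow> 'w) \<Rightarrow> nat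
    \<Rightarrow> 'w \<Rightarrow> real" where
  "opt_cdf P s0 op w0 r T w = (INF pol. wealth_cdf P s0 op w0 r T pol w)"

definition prec :: "'w::linorder set \<Rightarrow> 'w \<Rightarrow> 'w" where
  "prec W w = (if \<exists>w' \<in> W. w' < w then Max {w' \<in> W. w' < w} else w)"

end

theory Submission
  imports Defs
begin

text \<open>
  If some policy had a lower quantile below the optimum q*, that quantile would lie at or
  below prec(q*), so this policy's CDF would reach tau there; by minimality of F*, so would
  the CDF of a policy attaining q*, forcing its quantile to be at most prec(q*) < q*.
\<close>

lemma length_hist_dist:
  "h \<in> set_pmf (hist_dist P s0 pol t) \<Longrightarrow> length (fst h) = t"
  by (induction t arbitrary: h) (auto split: prod.splits)

lemma set_pmf_wealth_dist_subset:
  "set_pmf (map_pmf (wealth op w0 r) (hist_dist P s0 pol T)) \<subseteq> wealth_levels op w0 r T"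
  using length_hist_dist unfolding wealth_levels_def by fastforce

lemma finite_wealth_levels:
  "finite (wealth_levels op w0 (r :: 's::finite \<Rightarrow> 'a::finite \<Rightarrow> 'w) T)"
proof -
  have "wealth_levels op w0 r T = wealth op w0 r ` ({xs. length xs = T} \<times> UNIV)"
    unfolding wealth_levels_def by force
  moreover have "finite ({xs :: ('s \<times> 'a) list. length xs = T} \<times> (UNIV :: 's set))"
    using finite_lists_length_eq[of "UNIV :: ('s \<times> 'a) set"] by simp
  ultimately show ?thesis by simp
qed

lemma wealth_levels_nonempty: "wealth_levels op w0 r T \<noteq> {}"
  unfolding wealth_levels_def by (auto intro!: exI[of _ "replicate T undefined"])

lemma wealth_cdf_nonneg: "0 \<le> wealth_cdf P s0 op w0 r T pol w"
  unfolding wealth_cdf_def wealth_prob_def by (simp add: sum_nonneg)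

lemma wealth_cdf_mono:
  fixes r :: "'s::finite \<Rightarrow> 'a::finite \<Rightarrow> 'w::linorder"
  assumes "w \<le> v"
  shows "wealth_cdf P s0 op w0 r T pol w \<le> wealth_cdf P s0 op w0 r T pol v"
  unfolding wealth_cdf_def wealth_prob_def
  using finite_wealth_levels[of op w0 r T] assms by (intro sum_mono2) auto

lemma wealth_cdf_Max_wealth_levels:
  fixes r :: "'s::finite \<Rightarrow> 'a::finite \<Rightarrow> 'w::linorder"
  shows "wealth_cdf P s0 op w0 r T pol (Max (wealth_levels op w0 r T)) = 1"
proof -
  let ?W = "wealth_levels op w0 r T"
  have "{w' \<in> ?W. w' \<le> Max ?W} = ?W"
    using finite_wealth_levels[of op w0 r T] by auto
  then show ?thesis
    unfolding wealth_cdf_def wealth_prob_def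
    using sum_pmf_eq_1[OF finite_wealth_levels set_pmf_wealth_dist_subset] by simp
qed

lemma opt_cdf_le_wealth_cdf: "opt_cdf P s0 op w0 r T w \<le> wealth_cdf P s0 op w0 r T pol w"
  unfolding opt_cdf_def by (rule cINF_lower) (auto intro: bdd_belowI[of _ 0] wealth_cdf_nonneg)

lemma prec_less:
  fixes W :: "'w::linorder set"
  assumes "finite W" "w \<in> W" "w < q"
  shows "w \<le> prec W q" and "prec W q < q" and "prec W q \<in> W"
proof -
  have fin: "finite {w' \<in> W. w' < q}" and w: "w \<in> {w' \<in> W. w' < q}"
    using assms by auto
  have prec: "prec W q = Max {w' \<in> W. w' < q}"
    unfolding prec_def using assms by auto
  show "w \<le> prec W q" unfolding prec by (rule Max_ge[OF fin w])
  show "prec W q < q" "prec W q \<in> W" unfolding prec using Max_in[OF fin] w by auto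
qed

lemma lower_quantile_mem:
  fixes r :: "'s::finite \<Rightarrow> 'a::finite \<Rightarrow> 'w::linorder"
  assumes "tau \<le> 1"
  shows "lower_quantile P s0 op w0 r T tau pol \<in> wealth_levels op w0 r T"
    and "tau \<le> wealth_cdf P s0 op w0 r T pol (lower_quantile P s0 op w0 r T tau pol)"
proof -
  let ?W = "wealth_levels op w0 r T"
  define S where "S = {w \<in> ?W. tau \<le> wealth_cdf P s0 op w0 r T pol w}"
  have "Max ?W \<in> S"
    unfolding S_def using assms wealth_cdf_Max_wealth_levels[of P s0 op w0 r T pol]
      Max_in[OF finite_wealth_levels wealth_levels_nonempty, of op w0 r T] by simp
  then have "Min S \<in> S"
    by (intro Min_in) (auto simp: S_def finite_wealth_levels)
  then show "lower_quantile P s0 op w0 r T tau pol \<in> ?W"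
    and "tau \<le> wealth_cdf P s0 op w0 r T pol (lower_quantile P s0 op w0 r T tau pol)"
    unfolding lower_quantile_def S_def by auto
qed

lemma lower_quantile_le:
  fixes r :: "'s::finite \<Rightarrow> 'a::finite \<Rightarrow> 'w::linorder"
  assumes "w \<in> wealth_levels op w0 r T" "tau \<le> wealth_cdf P s0 op w0 r T pol w"
  shows "lower_quantile P s0 op w0 r T tau pol \<le> w"
  unfolding lower_quantile_def using assms finite_wealth_levels[of op w0 r T]
  by (intro Min_le) auto

lemma finite_range_lower_quantile:
  fixes r :: "'s::finite \<Rightarrow> 'a::finite \<Rightarrow> 'w::linorder"
  assumes "tau \<le> 1"
  shows "finite (range (lower_quantile P s0 op w0 r T tau))"
  using assms lower_quantile_mem(1)
  by (intro finite_subset[OF _ finite_wealth_levels[of op w0 r T]]) blast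

lemma lower_quantile_le_opt:
  fixes r :: "'s::finite \<Rightarrow> 'a::finite \<Rightarrow> 'w::linorder"
  assumes "tau \<le> 1"
  shows "lower_quantile P s0 op w0 r T tau pol \<le> opt_lower_quantile P s0 op w0 r T tau"
  unfolding opt_lower_quantile_def using finite_range_lower_quantile[OF assms, of P s0 op w0 r T] by simp

lemma opt_lower_quantile_attained:
  fixes r :: "'s::finite \<Rightarrow> 'a::finite \<Rightarrow> 'w::linorder"
  assumes "tau \<le> 1"
  obtains pol where "opt_lower_quantile P s0 op w0 r T tau = lower_quantile P s0 op w0 r T tau pol"
  using Max_in[OF finite_range_lower_quantile[OF assms, of P s0 op w0 r T]]
  unfolding opt_lower_quantile_def by auto

text \<open>Only the order on the wealth levels matters.\<close>

theorem lemma3: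
  fixes P :: "'s::finite \<Rightarrow> 'a::finite \<Rightarrow> 's pmf"
    and s0 :: 's
    and op :: "'w::linorder \<Rightarrow> 'w \<Rightarrow> 'w"
    and w0 :: 'w
    and r :: "'s \<Rightarrow> 'a \<Rightarrow> 'w"
    and T :: nat
    and tau :: real
    and pistar :: "('s, 'a) policy"
  assumes left_id: "\<forall>x. op w0 x = x"
    and tau_pos: "0 < tau" and tau_le: "tau \<le> 1"
    and hyp: "wealth_cdf P s0 op w0 r T pistar
                (prec (wealth_levels op w0 r T) (opt_lower_quantile P s0 op w0 r T tau))
              = opt_cdf P s0 op w0 r T
                (prec (wealth_levels op w0 r T) (opt_lower_quantile P s0 op w0 r T tau))"
  shows "lower_quantile P s0 op w0 r T tau pistar = opt_lower_quantile P s0 op w0 r T tau"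
proof (rule antisym[OF lower_quantile_le_opt[OF tau_le] leI], rule notI)
  let ?W = "wealth_levels op w0 r T" and ?F = "wealth_cdf P s0 op w0 r T"
  define q where "q = opt_lower_quantile P s0 op w0 r T tau"
  define p where "p = prec ?W q"
  obtain pol where pol: "q = lower_quantile P s0 op w0 r T tau pol"
    using opt_lower_quantile_attained[OF tau_le] unfolding q_def by blast
  assume "lower_quantile P s0 op w0 r T tau pistar < opt_lower_quantile P s0 op w0 r T tau"
  then have "lower_quantile P s0 op w0 r T tau pistar \<le> p" "p < q" "p \<in> ?W"
    using prec_less[OF finite_wealth_levels lower_quantile_mem(1)[OF tau_le, of P s0 op w0 r T pistar]]
    unfolding p_def q_def by auto
  have "tau \<le> ?F pistar p"
    using lower_quantile_mem(2)[OF tau_le] wealth_cdf_mono[OF \<open>_ \<le> p\<close>] by (rule order_trans)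
  also have "?F pistar p \<le> ?F pol p"
    using hyp opt_cdf_le_wealth_cdf unfolding p_def q_def by metis
  finally have "q \<le> p"
    unfolding pol using \<open>p \<in> ?W\<close> by (blast intro: lower_quantile_le)
  then show False using \<open>p < q\<close> by simp
qed

end
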